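(* Let $K$ be an algebraically closed field of characteristic $0$ and let $X$ be a finite set of distinct points in $\mathbb{P}^1\times\mathbb{P}^1\times\mathbb{P}^1$ over $K$. Let $t_1=|\pi_1(X)|$ and $t_2=|\pi_2(X)|$. For every integer $k\ge 0$, \[ r_{k+1}(X)=d_{t_1-1,t_2-1,k}-d_{t_1-1,t_2-1,k+1}=2H_X(t_1-1,t_2-1,k)-H_X(t_1-1,t_2-1,k-1)-H_X(t_1-1,t_2-1,k+1). \]
   Context: Let $R=K[x_0,x_1,y_0,y_1,z_0,z_1]$ be $\mathbb{N}^3$-graded with $\deg x_i=(1,0,0)$, $\deg y_i=(0,1,0)$, $\deg z_i=(0,0,1)$. For a point $P=[a_0:a_1]\times[b_0:b_1]\times[c_0:c_1]$, $I(P)=(a_1x_0-a_0x_1,\,b_1y_0-b_0y_1,\,c_1z_0-c_0z_1)$, and for $X=\{P_1,\dots,P_s\}$, $I(X)=\bigcap_i I(P_i)$. The Hilbert function is $H_X(i,j,k)=\dim_K R_{i,j,k}-\dim_K I(X)_{i,j,k}$ for $(i,j,k)\in\mathbb{N}^3$, and $H_X(a,b,c)=0$ if some coordinate of $(a,b,c)$ is negative. $\pi_i:\mathbb{P}^1\times\mathbb{P}^1\times\mathbb{P}^1\to\mathbb{P}^1$ is the projection to the $i$-th factor. A line of type $(1,1,0)$ is the subvariety defined by an ideal $(L,L')$ with $L\in R_{1,0,0}$, $L'\in R_{0,1,0}$ nonzero. For $i\ge1$, $r_i(X)$ is the number of lines of type $(1,1,0)$ containing exactly $i$ points of $X$. Set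 $d_{i,j,k}=H_X(i,j,k)-H_X(i,j,k-1)$. *)

theory Defs
  imports "HOL-Library.Poly_Mapping" "HOL-Computational_Algebra.Polynomial"
begin

datatype var = X0 | X1 | Y0 | Y1 | Z0 | Z1

type_synonym 'a mpoly6 = "(var \<Rightarrow>\<^sub>0 nat) \<Rightarrow>\<^sub>0 'a"

definition Var :: "var \<Rightarrow> 'a::comm_ring_1 mpoly6" where
  "Var v = Poly_Mapping.single (Poly_Mapping.single v 1) 1"

definition Const :: "'a::comm_ring_1 \<Rightarrow> 'a mpoly6" where
  "Const c = Poly_Mapping.single 0 c"

definition scaleR6 :: "'a::field \<Rightarrow> 'a mpoly6 \<Rightarrow> 'a mpoly6" where
  "scaleR6 c F = Poly_Mapping.map (\<lambda>x. c * x) F"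

definition mdeg :: "(var \<Rightarrow>\<^sub>0 nat) \<Rightarrow> nat \<times> nat \<times> nat" where
  "mdeg m = (Poly_Mapping.lookup m X0 + Poly_Mapping.lookup m X1, Poly_Mapping.lookup m Y0 + Poly_Mapping.lookup m Y1, Poly_Mapping.lookup m Z0 + Poly_Mapping.lookup m Z1)"

definition Rdeg :: "nat \<Rightarrow> nat \<Rightarrow> nat \<Rightarrow> 'a::comm_ring_1 mpoly6 set" where
  "Rdeg i j k = {F. \<forall>m \<in> Poly_Mapping.keys F. mdeg m = (i, j, k)}"

text \<open>A point [a0:a1] x [b0:b1] x [c0:c1] is given by a representative triple of
  nonzero vectors ((a0,a1),(b0,b1),(c0,c1)).\<close>
type_synonym 'a pt3 = "('a \<times> 'a) \<times> ('a \<times> 'a) \<times> ('a \<times> 'a)"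

definition valid_pt :: "'a::field pt3 \<Rightarrow> bool" where
  "valid_pt P = (case P of (u, v, w) \<Rightarrow> u \<noteq> (0,0) \<and> v \<noteq> (0,0) \<and> w \<noteq> (0,0))"

definition proj_eq :: "'a::field \<times> 'a \<Rightarrow> 'a \<times> 'a \<Rightarrow> bool" where
  "proj_eq u v = (fst u * snd v = snd u * fst v)"

definition same_point :: "'a::field pt3 \<Rightarrow> 'a pt3 \<Rightarrow> bool" where
  "same_point P Q = (proj_eq (fst P) (fst Q) \<and> proj_eq (fst (snd P)) (fst (snd Q))
                      \<and> proj_eq (snd (snd P)) (snd (snd Q)))"

definition point_set :: "'a::field pt3 set \<Rightarrow> bool" where
  "point_set X = (finite X \<and> (\<forall>P\<in>X. valid_pt P) \<and>
      (\<forall>P\<in>X. \<forall>Q\<in>X. same_point P Q \<longrightarrow> P = Q))"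

definition p1class :: "'a::field \<times> 'a \<Rightarrow> ('a \<times> 'a) set" where
  "p1class u = {v. v \<noteq> (0,0) \<and> proj_eq v u}"

definition t1 :: "'a::field pt3 set \<Rightarrow> nat" where
  "t1 X = card ((\<lambda>P. p1class (fst P)) ` X)"

definition t2 :: "'a::field pt3 set \<Rightarrow> nat" where
  "t2 X = card ((\<lambda>P. p1class (fst (snd P))) ` X)"

definition ideal_pt :: "'a::field pt3 \<Rightarrow> 'a mpoly6 set" where
  "ideal_pt P = (case P of ((a0, a1), (b0, b1), (c0, c1)) \<Rightarrow>
     {(Const a1 * Var X0 - Const a0 * Var X1) * G1
      + (Const b1 * Var Y0 - Const b0 * Var Y1) * G2
      + (Const c1 * Var Z0 - Const c0 * Var Z1) * G3 | G1 G2 G3. True})"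

definition ideal_X :: "'a::field pt3 set \<Rightarrow> 'a mpoly6 set" where
  "ideal_X X = (\<Inter>P\<in>X. ideal_pt P)"

definition vdim :: "'a::field mpoly6 set \<Rightarrow> nat" where
  "vdim V = vector_space.dim scaleR6 V"

definition HX :: "'a::field pt3 set \<Rightarrow> int \<Rightarrow> int \<Rightarrow> int \<Rightarrow> int" where
  "HX X i j k = (if i < 0 \<or> j < 0 \<or> k < 0 then 0 else
     int (vdim (Rdeg (nat i) (nat j) (nat k) :: 'a mpoly6 set))
     - int (vdim (ideal_X X \<inter> Rdeg (nat i) (nat j) (nat k))))"

definition dX :: "'a::field pt3 set \<Rightarrow> int \<Rightarrow> int \<Rightarrow> int \<Rightarrow> int" where
  "dX X i j k = HX X i j k - HX X i j (k - 1)"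

text \<open>The line defined by (L, L') with L = l0 x0 + l1 x1, L' = m0 y0 + m1 y1 nonzero,
  as the set of (representatives of) points of P1 x P1 x P1 on which L and L' vanish.\<close>
definition line110 :: "'a::field \<times> 'a \<Rightarrow> 'a \<times> 'a \<Rightarrow> 'a pt3 set" where
  "line110 l m = {Q. valid_pt Q \<and>
      fst l * fst (fst Q) + snd l * snd (fst Q) = 0 \<and>
      fst m * fst (fst (snd Q)) + snd m * snd (fst (snd Q)) = 0}"

definition is_line110 :: "'a::field pt3 set \<Rightarrow> bool" where
  "is_line110 L = (\<exists>l m. l \<noteq> (0,0) \<and> m \<noteq> (0,0) \<and> L = line110 l m)"

definition r_lines :: "nat \<Rightarrow> 'a::field pt3 set \<Rightarrow> nat" where
  "r_lines i X = card {L. is_line110 L \<and> card (X \<inter> L) = i}"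

definition alg_closed :: "'a::field itself \<Rightarrow> bool" where
  "alg_closed _ = (\<forall>p :: 'a poly. degree p > 0 \<longrightarrow> (\<exists>x. poly p x = 0))"

end

theory Submission
  imports Defs "HOL-Library.Function_Algebras"
begin

text \<open>Evaluating a form of multidegree \<open>(i,j,k)\<close> at the points of \<open>X\<close> is a linear map whose kernel is
  \<open>I(X)\<^sub>i\<^sub>j\<^sub>k\<close>, since a multihomogeneous form vanishing at a point lies in the ideal of that point; so
  \<open>H\<^sub>X(i,j,k)\<close> is the dimension of the space of functions on \<open>X\<close> obtained this way.
  In multidegree \<open>(t\<^sub>1-1, t\<^sub>2-1, k)\<close> this space splits along the fibres \<open>\<Phi>\<close> of \<open>X\<close> over
  \<open>\<pi>\<^sub>1(X) \<times> \<pi>\<^sub>2(X)\<close>: products of linear forms in the \<open>x\<close>- and \<open>y\<close>-variables separate the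
  fibres, and on one fibre, whose points differ only in their third coordinate, forms of
  \<open>z\<close>-degree \<open>k\<close> give exactly \<open>min (k + 1) |\<Phi>|\<close> independent functions. Hence
  \<open>H\<^sub>X(t\<^sub>1-1, t\<^sub>2-1, k) = \<Sum>\<^sub>\<Phi> min (k + 1) |\<Phi>|\<close>. The fibres are exactly the nonempty
  intersections of \<open>X\<close> with lines of type \<open>(1,1,0)\<close>, and the second difference of
  \<open>k \<mapsto> min k c\<close> is the indicator of \<open>c = k + 1\<close>.\<close>

lemma Const_add: "Const (a + b) = (Const a + Const b :: 'a::comm_ring_1 mpoly6)"
  by (simp add: Const_def single_add)

lemma Const_mult: "Const (a * b) = (Const a * Const b :: 'a::comm_ring_1 mpoly6)"
  by (simp add: Const_def mult_single)

lemma Const_0: "Const 0 = (0 :: 'a::comm_ring_1 mpoly6)"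
  by (simp add: Const_def)

lemma Const_1: "Const 1 = (1 :: 'a::comm_ring_1 mpoly6)"
  by (simp add: Const_def)

lemma Const_power: "Const (a ^ n) = (Const a ^ n :: 'a::comm_ring_1 mpoly6)"
  by (induct n) (simp_all add: Const_1 Const_mult)

lemma Const_sum: "Const (sum g A) = (\<Sum>a\<in>A. Const (g a) :: 'a::comm_ring_1 mpoly6)"
  by (induct A rule: infinite_finite_induct) (simp_all add: Const_0 Const_add)

lemma scaleR6_eq_Const_mult: "scaleR6 c F = Const c * F"
  by (simp add: scaleR6_def Const_def mult_map_scale_conv_mult)

interpretation R: vector_space "scaleR6 :: 'a::field \<Rightarrow> 'a mpoly6 \<Rightarrow> 'a mpoly6"
  by unfold_locales (simp_all add: scaleR6_eq_Const_mult Const_add Const_mult Const_1 algebra_simps)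

definition mon :: "(var \<Rightarrow>\<^sub>0 nat) \<Rightarrow> 'a::comm_ring_1 mpoly6" where
  "mon m = Poly_Mapping.single m 1"

lemma mon_add: "mon (m + n) = (mon m * mon n :: 'a::comm_ring_1 mpoly6)"
  by (simp add: mon_def mult_single)

lemma poly_mapping_eq_sum_singles:
  "F = (\<Sum>m\<in>Poly_Mapping.keys F. Poly_Mapping.single m (Poly_Mapping.lookup F m))"
  by (rule poly_mapping_eqI)
     (auto simp: lookup_sum lookup_single when_def in_keys_iff sum.delta[OF finite_keys] cong: if_cong)

lemma mpoly6_eq_sum_monomials:
  "F = (\<Sum>m\<in>Poly_Mapping.keys F. Const (Poly_Mapping.lookup F m) * mon m)"
  by (subst poly_mapping_eq_sum_singles) (simp add: Const_def mon_def mult_single)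

lemma monomial_eq_sum_singles:
  "m = Poly_Mapping.single X0 (Poly_Mapping.lookup m X0) + Poly_Mapping.single X1 (Poly_Mapping.lookup m X1)
     + Poly_Mapping.single Y0 (Poly_Mapping.lookup m Y0) + Poly_Mapping.single Y1 (Poly_Mapping.lookup m Y1)
     + Poly_Mapping.single Z0 (Poly_Mapping.lookup m Z0) + Poly_Mapping.single Z1 (Poly_Mapping.lookup m Z1)"
  by (rule poly_mapping_eqI, rename_tac v, case_tac v) (simp_all add: lookup_add lookup_single)

lemma Var_power: "Var v ^ n = (mon (Poly_Mapping.single v n) :: 'a::comm_ring_1 mpoly6)"
  by (induct n) (simp_all add: Var_def mon_def mult_single single_add[symmetric] add.commute)

lemma mon_eq_Var_product:
  "(mon m :: 'a::comm_ring_1 mpoly6)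
     = (Var X0 ^ Poly_Mapping.lookup m X0 * Var X1 ^ Poly_Mapping.lookup m X1)
     * (Var Y0 ^ Poly_Mapping.lookup m Y0 * Var Y1 ^ Poly_Mapping.lookup m Y1)
     * (Var Z0 ^ Poly_Mapping.lookup m Z0 * Var Z1 ^ Poly_Mapping.lookup m Z1)"
  by (subst monomial_eq_sum_singles) (simp only: mon_add Var_power mult.assoc)

definition mon_val :: "'a::comm_ring_1 pt3 \<Rightarrow> (var \<Rightarrow>\<^sub>0 nat) \<Rightarrow> 'a" where
  "mon_val P m =
     (fst (fst P) ^ Poly_Mapping.lookup m X0 * snd (fst P) ^ Poly_Mapping.lookup m X1)
   * (fst (fst (snd P)) ^ Poly_Mapping.lookup m Y0 * snd (fst (snd P)) ^ Poly_Mapping.lookup m Y1)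
   * (fst (snd (snd P)) ^ Poly_Mapping.lookup m Z0 * snd (snd (snd P)) ^ Poly_Mapping.lookup m Z1)"

definition eval :: "'a::comm_ring_1 pt3 \<Rightarrow> 'a mpoly6 \<Rightarrow> 'a" where
  "eval P F = (\<Sum>m\<in>Poly_Mapping.keys F. Poly_Mapping.lookup F m * mon_val P m)"

lemma mon_val_add: "mon_val P (m + n) = mon_val P m * mon_val P n"
  by (simp add: mon_val_def lookup_add power_add algebra_simps)

lemma eval_eq_sum_superset:
  "finite S \<Longrightarrow> Poly_Mapping.keys F \<subseteq> S \<Longrightarrow> eval P F = (\<Sum>m\<in>S. Poly_Mapping.lookup F m * mon_val P m)"
  unfolding eval_def by (rule sum.mono_neutral_left) (auto simp: in_keys_iff)

lemma eval_add: "eval P (F + G) = eval P F + eval P G"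
proof -
  let ?S = "Poly_Mapping.keys F \<union> Poly_Mapping.keys G"
  have "eval P (F + G) = (\<Sum>m\<in>?S. Poly_Mapping.lookup (F + G) m * mon_val P m)"
    by (rule eval_eq_sum_superset) (auto simp: keys_add)
  then show ?thesis
    by (simp add: eval_eq_sum_superset[of ?S] lookup_add distrib_right sum.distrib)
qed

lemma eval_0 [simp]: "eval P 0 = 0"
  by (simp add: eval_def)

lemma eval_single: "eval P (Poly_Mapping.single m c) = c * mon_val P m"
  by (cases "c = 0") (simp_all add: eval_def)

lemma eval_mon: "eval P (mon m) = mon_val P m"
  by (simp add: mon_def eval_single)

lemma eval_sum: "eval P (sum g A) = (\<Sum>a\<in>A. eval P (g a))"
  by (induct A rule: infinite_finite_induct) (simp_all add: eval_add)

lemma eval_diff: "eval P (F - G) = eval P F - eval P G"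
  using eval_add[of P "F - G" G] by simp

lemma eval_mult: "eval P (F * G) = eval P F * eval P G"
proof -
  let ?sF = "\<lambda>m. Poly_Mapping.lookup F m" and ?sG = "\<lambda>n. Poly_Mapping.lookup G n"
  have "F * G = (\<Sum>m\<in>Poly_Mapping.keys F. Poly_Mapping.single m (?sF m))
                * (\<Sum>n\<in>Poly_Mapping.keys G. Poly_Mapping.single n (?sG n))"
    by (intro arg_cong2[where f = "(*)"] poly_mapping_eq_sum_singles)
  also have "\<dots> = (\<Sum>m\<in>Poly_Mapping.keys F. \<Sum>n\<in>Poly_Mapping.keys G.
                      Poly_Mapping.single (m + n) (?sF m * ?sG n))"
    by (simp add: sum_distrib_left sum_distrib_right mult_single sum.swap[of _ "Poly_Mapping.keys G"])
  finally have "eval P (F * G) = (\<Sum>m\<in>Poly_Mapping.keys F. \<Sum>n\<in>Poly_Mapping.keys G.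
                                   (?sF m * mon_val P m) * (?sG n * mon_val P n))"
    by (simp add: eval_sum eval_single mon_val_add algebra_simps)
  then show ?thesis
    by (simp add: eval_def sum_product)
qed

lemma eval_Const: "eval P (Const c) = c"
  by (simp add: Const_def eval_single mon_val_def)

lemma eval_Var:
  "eval P (Var X0) = fst (fst P)" "eval P (Var X1) = snd (fst P)"
  "eval P (Var Y0) = fst (fst (snd P))" "eval P (Var Y1) = snd (fst (snd P))"
  "eval P (Var Z0) = fst (snd (snd P))" "eval P (Var Z1) = snd (snd (snd P))"
  by (simp_all add: Var_def eval_single mon_val_def lookup_single)

lemma eval_power: "eval P (F ^ n) = eval P F ^ n"
  by (induct n) (simp_all add: eval_mult eval_Const flip: Const_1)

lemma eval_prod: "eval P (prod g A) = (\<Prod>a\<in>A. eval P (g a))"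
  by (induct A rule: infinite_finite_induct) (simp_all add: eval_mult eval_Const flip: Const_1)

lemma Rdeg_0 [simp]: "0 \<in> Rdeg i j k"
  by (simp add: Rdeg_def)

lemma Rdeg_add: "F \<in> Rdeg i j k \<Longrightarrow> G \<in> Rdeg i j k \<Longrightarrow> F + G \<in> Rdeg i j k"
  unfolding Rdeg_def using keys_add[of F G] by blast

lemma Rdeg_diff: "F \<in> Rdeg i j k \<Longrightarrow> G \<in> Rdeg i j k \<Longrightarrow> F - G \<in> Rdeg i j k"
  unfolding Rdeg_def using keys_add[of F "- G"] by (auto simp: keys_minus)

lemma Rdeg_mult:
  assumes "F \<in> Rdeg i j k" "G \<in> Rdeg i' j' k'"
  shows "F * G \<in> Rdeg (i + i') (j + j') (k + k')"
  unfolding Rdeg_def mem_Collect_eq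
proof (intro ballI)
  fix m assume "m \<in> Poly_Mapping.keys (F * G)"
  then obtain a b where "m = a + b" "a \<in> Poly_Mapping.keys F" "b \<in> Poly_Mapping.keys G"
    using keys_mult[of F G] by blast
  then show "mdeg m = (i + i', j + j', k + k')"
    using assms by (auto simp: Rdeg_def mdeg_def lookup_add)
qed

lemma Rdeg_Const: "Const c \<in> Rdeg 0 0 0"
  by (simp add: Rdeg_def Const_def mdeg_def)

lemma Rdeg_Const_mult: "F \<in> Rdeg i j k \<Longrightarrow> Const c * F \<in> Rdeg i j k"
  using Rdeg_mult[OF Rdeg_Const] by fastforce

lemma Rdeg_Var:
  "Var X0 \<in> Rdeg 1 0 0" "Var X1 \<in> Rdeg 1 0 0" "Var Y0 \<in> Rdeg 0 1 0"
  "Var Y1 \<in> Rdeg 0 1 0" "Var Z0 \<in> Rdeg 0 0 1" "Var Z1 \<in> Rdeg 0 0 1"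
  by (simp_all add: Rdeg_def Var_def mdeg_def lookup_single)

lemma Rdeg_power: "F \<in> Rdeg i j k \<Longrightarrow> F ^ n \<in> Rdeg (n * i) (n * j) (n * k)"
  by (induct n) (use Rdeg_Const[of 1] in \<open>simp_all add: Const_1 Rdeg_mult\<close>)

lemma Rdeg_prod:
  "(\<And>a. a \<in> A \<Longrightarrow> g a \<in> Rdeg i j k) \<Longrightarrow> prod g A \<in> Rdeg (card A * i) (card A * j) (card A * k)"
proof (induct A rule: infinite_finite_induct)
  case (insert x A)
  then have "g x * prod g A \<in> Rdeg (i + card A * i) (j + card A * j) (k + card A * k)"
    by (intro Rdeg_mult) auto
  then show ?case using insert by simp
qed (use Rdeg_Const[of 1] in \<open>simp_all add: Const_1\<close>)

lemma finite_mdeg: "finite {m. mdeg m = (i, j, k)}"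
proof -
  let ?f = "\<lambda>(p, q, r, s, t, u). Poly_Mapping.single X0 p + Poly_Mapping.single X1 q
    + Poly_Mapping.single Y0 r + Poly_Mapping.single Y1 s + Poly_Mapping.single Z0 t + Poly_Mapping.single Z1 u"
  have "{m. mdeg m = (i, j, k)} \<subseteq> ?f ` ({..i} \<times> {..i} \<times> {..j} \<times> {..j} \<times> {..k} \<times> {..k})"
  proof
    fix m assume "m \<in> {m. mdeg m = (i, j, k)}"
    then show "m \<in> ?f ` ({..i} \<times> {..i} \<times> {..j} \<times> {..j} \<times> {..k} \<times> {..k})"
      by (intro image_eqI[where x = "(Poly_Mapping.lookup m X0, Poly_Mapping.lookup m X1,
            Poly_Mapping.lookup m Y0, Poly_Mapping.lookup m Y1, Poly_Mapping.lookup m Z0, Poly_Mapping.lookup m Z1)"])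
         (auto simp: mdeg_def intro: monomial_eq_sum_singles)
  qed
  then show ?thesis by (rule finite_subset) simp
qed

lemma Rdeg_subset_span_monomials: "Rdeg i j k \<subseteq> R.span (mon ` {m. mdeg m = (i, j, k)})"
proof
  fix F :: "'a mpoly6" assume F: "F \<in> Rdeg i j k"
  have "F = (\<Sum>m\<in>Poly_Mapping.keys F. scaleR6 (Poly_Mapping.lookup F m) (mon m))"
    by (subst mpoly6_eq_sum_monomials) (simp add: scaleR6_eq_Const_mult)
  also have "\<dots> \<in> R.span (mon ` {m. mdeg m = (i, j, k)})"
    using F by (intro R.span_sum R.span_scale R.span_base) (auto simp: Rdeg_def)
  finally show "F \<in> R.span (mon ` {m. mdeg m = (i, j, k)})" .
qed

lemma Rdeg_subspace: "R.subspace (Rdeg i j k)"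
  unfolding R.subspace_def by (simp add: Rdeg_add scaleR6_eq_Const_mult Rdeg_Const_mult)

lemma proj_eq_refl: "proj_eq u u"
  by (simp add: proj_eq_def mult.commute)

lemma proj_eq_sym: "proj_eq u v \<Longrightarrow> proj_eq v u"
  by (simp add: proj_eq_def mult.commute)

lemma proj_eq_trans:
  fixes u v w :: "'a::field \<times> 'a"
  assumes "proj_eq u v" "proj_eq v w" "v \<noteq> (0, 0)"
  shows "proj_eq u w"
proof -
  obtain u0 u1 v0 v1 w0 w1 where uvw: "u = (u0, u1)" "v = (v0, v1)" "w = (w0, w1)"
    by fastforce
  have uv: "u0 * v1 = u1 * v0" and vw: "v0 * w1 = v1 * w0"
    using assms(1,2) by (simp_all add: proj_eq_def uvw)
  have "v0 * (u0 * w1 - u1 * w0) = u0 * (v0 * w1) - (u1 * v0) * w0"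
       "v1 * (u0 * w1 - u1 * w0) = (u0 * v1) * w1 - u1 * (v1 * w0)"
    by (simp_all add: algebra_simps)
  then have "v0 * (u0 * w1 - u1 * w0) = 0" "v1 * (u0 * w1 - u1 * w0) = 0"
    by (simp_all add: uv vw algebra_simps)
  then show ?thesis using assms(3) by (auto simp: proj_eq_def uvw)
qed

lemma p1class_eq_iff:
  fixes u v :: "'a::field \<times> 'a"
  assumes "u \<noteq> (0, 0)" "v \<noteq> (0, 0)"
  shows "p1class u = p1class v \<longleftrightarrow> proj_eq u v"
proof
  assume "p1class u = p1class v"
  moreover have "u \<in> p1class u" using assms(1) by (simp add: p1class_def proj_eq_refl)
  ultimately show "proj_eq u v" by (simp add: p1class_def)
next
  assume "proj_eq u v"
  then show "p1class u = p1class v"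
    unfolding p1class_def using assms proj_eq_trans proj_eq_sym by blast
qed

definition proj_ratio :: "'a::field \<times> 'a \<Rightarrow> 'a \<times> 'a \<Rightarrow> 'a" where
  "proj_ratio u v = (if fst v \<noteq> 0 then fst u / fst v else snd u / snd v)"

lemma proj_eq_imp_multiple:
  fixes u v :: "'a::field \<times> 'a"
  assumes "proj_eq u v" "v \<noteq> (0, 0)"
  shows "u = (proj_ratio u v * fst v, proj_ratio u v * snd v)"
  using assms by (cases u, cases v) (auto simp: proj_eq_def proj_ratio_def field_simps)

definition ideal3 :: "'r::comm_ring_1 \<Rightarrow> 'r \<Rightarrow> 'r \<Rightarrow> 'r set" where
  "ideal3 L1 L2 L3 = {L1 * G1 + L2 * G2 + L3 * G3 | G1 G2 G3. True}"

lemma ideal3_add: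
  assumes "F \<in> ideal3 L1 L2 L3" "G \<in> ideal3 L1 L2 L3"
  shows "F + G \<in> ideal3 L1 L2 L3"
proof -
  obtain F1 F2 F3 where "F = L1 * F1 + L2 * F2 + L3 * F3" using assms(1) by (auto simp: ideal3_def)
  moreover obtain G1 G2 G3 where "G = L1 * G1 + L2 * G2 + L3 * G3"
    using assms(2) by (auto simp: ideal3_def)
  ultimately have "F + G = L1 * (F1 + G1) + L2 * (F2 + G2) + L3 * (F3 + G3)"
    by (simp add: algebra_simps)
  then show ?thesis unfolding ideal3_def by blast
qed

lemma ideal3_mult:
  assumes "F \<in> ideal3 L1 L2 L3"
  shows "H * F \<in> ideal3 L1 L2 L3"
proof -
  obtain F1 F2 F3 where "F = L1 * F1 + L2 * F2 + L3 * F3" using assms by (auto simp: ideal3_def)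
  then have "H * F = L1 * (H * F1) + L2 * (H * F2) + L3 * (H * F3)" by (simp add: algebra_simps)
  then show ?thesis unfolding ideal3_def by blast
qed

lemma ideal3_dvdI:
  assumes "L1 dvd F \<or> L2 dvd F \<or> L3 dvd F"
  shows "F \<in> ideal3 L1 L2 L3"
proof -
  have "\<exists>G1 G2 G3. F = L1 * G1 + L2 * G2 + L3 * G3"
    using assms by (elim disjE dvdE) (metis add.right_neutral add_0 mult_zero_right)+
  then show ?thesis unfolding ideal3_def by blast
qed

lemma ideal3_sum: "(\<And>a. a \<in> A \<Longrightarrow> g a \<in> ideal3 L1 L2 L3) \<Longrightarrow> sum g A \<in> ideal3 L1 L2 L3"
  by (induct A rule: infinite_finite_induct) (simp_all add: ideal3_add ideal3_dvdI)

lemma ideal3_mult3_congruent: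
  assumes "A - A' \<in> ideal3 L1 L2 L3" "B - B' \<in> ideal3 L1 L2 L3" "C - C' \<in> ideal3 L1 L2 L3"
  shows "A * B * C - A' * B' * C' \<in> ideal3 L1 L2 L3"
proof -
  have "A * B * C - A' * B' * C' = (B * C) * (A - A') + (A' * C) * (B - B') + (A' * B') * (C - C')"
    by (simp add: algebra_simps)
  then show ?thesis using assms by (simp add: ideal3_add ideal3_mult)
qed

definition Lx :: "'a::comm_ring_1 \<times> 'a \<Rightarrow> 'a mpoly6" where
  "Lx u = Const (snd u) * Var X0 - Const (fst u) * Var X1"
definition Ly :: "'a::comm_ring_1 \<times> 'a \<Rightarrow> 'a mpoly6" where
  "Ly u = Const (snd u) * Var Y0 - Const (fst u) * Var Y1"
definition Lz :: "'a::comm_ring_1 \<times> 'a \<Rightarrow> 'a mpoly6" where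
  "Lz u = Const (snd u) * Var Z0 - Const (fst u) * Var Z1"

lemma ideal_pt_eq_ideal3: "ideal_pt P = ideal3 (Lx (fst P)) (Ly (fst (snd P))) (Lz (snd (snd P)))"
  by (simp add: ideal_pt_def ideal3_def Lx_def Ly_def Lz_def split: prod.split)

lemma eval_Lx: "eval Q (Lx u) = 0 \<longleftrightarrow> proj_eq (fst Q) u"
  by (simp add: Lx_def eval_diff eval_mult eval_Const eval_Var proj_eq_def algebra_simps)
lemma eval_Ly: "eval Q (Ly u) = 0 \<longleftrightarrow> proj_eq (fst (snd Q)) u"
  by (simp add: Ly_def eval_diff eval_mult eval_Const eval_Var proj_eq_def algebra_simps)
lemma eval_Lz: "eval Q (Lz u) = 0 \<longleftrightarrow> proj_eq (snd (snd Q)) u"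
  by (simp add: Lz_def eval_diff eval_mult eval_Const eval_Var proj_eq_def algebra_simps)

lemma Rdeg_Lx: "Lx u \<in> Rdeg 1 0 0"
  unfolding Lx_def by (intro Rdeg_diff Rdeg_Const_mult Rdeg_Var)
lemma Rdeg_Ly: "Ly u \<in> Rdeg 0 1 0"
  unfolding Ly_def by (intro Rdeg_diff Rdeg_Const_mult Rdeg_Var)
lemma Rdeg_Lz: "Lz u \<in> Rdeg 0 0 1"
  unfolding Lz_def by (intro Rdeg_diff Rdeg_Const_mult Rdeg_Var)

lemma eval_ideal_pt:
  assumes "F \<in> ideal_pt P"
  shows "eval P F = 0"
proof -
  have "eval P (Lx (fst P)) = 0" "eval P (Ly (fst (snd P))) = 0" "eval P (Lz (snd (snd P))) = 0"
    by (simp_all add: eval_Lx eval_Ly eval_Lz proj_eq_refl)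
  then show ?thesis
    using assms by (auto simp: ideal_pt_eq_ideal3 ideal3_def eval_add eval_mult)
qed

lemma linear_form_dvd_monomial_diff:
  fixes x0 x1 a0 a1 :: "'r::comm_ring_1"
  shows "(a1 * x0 - a0 * x1) dvd (a0 ^ (p + q) * (x0 ^ p * x1 ^ q) - a0 ^ p * a1 ^ q * x0 ^ (p + q))"
proof -
  have "(a1 * x0 - a0 * x1) dvd ((a1 * x0) ^ q - (a0 * x1) ^ q)"
    unfolding dvd_def using power_diff_sumr2[of "a1 * x0" q "a0 * x1"] by blast
  then have "(a1 * x0 - a0 * x1) dvd (- (a0 ^ p * x0 ^ p) * ((a1 * x0) ^ q - (a0 * x1) ^ q))"
    by (rule dvd_mult)
  also have "- (a0 ^ p * x0 ^ p) * ((a1 * x0) ^ q - (a0 * x1) ^ q)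
           = a0 ^ (p + q) * (x0 ^ p * x1 ^ q) - a0 ^ p * a1 ^ q * x0 ^ (p + q)"
    by (simp add: power_add power_mult_distrib algebra_simps)
  finally show ?thesis .
qed

lemma monomial_congruent_mod_linear_form:
  fixes x0 x1 :: "'a::field mpoly6"
  assumes "a0 \<noteq> 0" "p + q = d"
  shows "(Const a1 * x0 - Const a0 * x1) dvd
           (x0 ^ p * x1 ^ q - Const (a0 ^ p * a1 ^ q) * (Const (inverse (a0 ^ d)) * x0 ^ d))"
proof -
  have "(Const a1 * x0 - Const a0 * x1) dvd
          Const (inverse (a0 ^ d)) * (Const (a0 ^ d) * (x0 ^ p * x1 ^ q) - Const (a0 ^ p * a1 ^ q) * x0 ^ d)"
    using linear_form_dvd_monomial_diff[of "Const a1" x0 "Const a0" x1 p q] assms(2)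
    by (simp add: Const_power Const_mult)
  moreover have "Const (inverse (a0 ^ d)) * Const (a0 ^ d) = (1 :: 'a mpoly6)"
    using assms(1) by (simp add: Const_1 flip: Const_mult)
  moreover have "Const (inverse (a0 ^ d)) * (Const (a0 ^ d) * M - C * x0 ^ d)
      = (Const (inverse (a0 ^ d)) * Const (a0 ^ d)) * M - C * (Const (inverse (a0 ^ d)) * x0 ^ d)"
    for M C :: "'a mpoly6"
    by (simp add: algebra_simps)
  ultimately show ?thesis
    by simp
qed

lemma obtain_monomial_normal_form:
  fixes x0 x1 :: "'a::field mpoly6"
  assumes "(a0, a1) \<noteq> (0, 0)"
  obtains N where "\<And>p q. p + q = d \<Longrightarrow>
    (Const a1 * x0 - Const a0 * x1) dvd (x0 ^ p * x1 ^ q - Const (a0 ^ p * a1 ^ q) * N)"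
proof (cases "a0 = 0")
  case True
  then have "a1 \<noteq> 0" using assms by simp
  have "(Const a1 * x0 - Const a0 * x1) dvd
          (x0 ^ p * x1 ^ q - Const (a0 ^ p * a1 ^ q) * (Const (inverse (a1 ^ d)) * x1 ^ d))"
    if "p + q = d" for p q
  proof -
    have "(Const a0 * x1 - Const a1 * x0) dvd
            (x0 ^ p * x1 ^ q - Const (a0 ^ p * a1 ^ q) * (Const (inverse (a1 ^ d)) * x1 ^ d))"
      using monomial_congruent_mod_linear_form[OF \<open>a1 \<noteq> 0\<close>, of q p d a0 x1 x0] that
      by (simp add: add.commute mult.commute)
    moreover have "Const a1 * x0 - Const a0 * x1 = - (Const a0 * x1 - Const a1 * x0)"
      by simp
    ultimately show ?thesis
      by (metis minus_dvd_iff)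
  qed
  then show ?thesis by (rule that)
next
  case False
  show ?thesis
    by (rule that, rule monomial_congruent_mod_linear_form[OF False])
qed

lemma obtain_monomial_normal_form_mod_ideal_pt:
  assumes "valid_pt P"
  obtains N where "\<And>m. mdeg m = (i, j, k) \<Longrightarrow> mon m - Const (mon_val P m) * N \<in> ideal_pt P"
proof -
  obtain a0 a1 b0 b1 c0 c1 where P: "P = ((a0, a1), (b0, b1), (c0, c1))"
    by (metis prod.exhaust)
  have nonzero: "(a0, a1) \<noteq> (0, 0)" "(b0, b1) \<noteq> (0, 0)" "(c0, c1) \<noteq> (0, 0)"
    using assms by (simp_all add: P valid_pt_def)
  obtain Nx where Nx: "\<And>p q. p + q = i \<Longrightarrow>
      Lx (a0, a1) dvd (Var X0 ^ p * Var X1 ^ q - Const (a0 ^ p * a1 ^ q) * Nx)"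
    using obtain_monomial_normal_form[OF nonzero(1), of i "Var X0" "Var X1"] by (auto simp: Lx_def)
  obtain Ny where Ny: "\<And>p q. p + q = j \<Longrightarrow>
      Ly (b0, b1) dvd (Var Y0 ^ p * Var Y1 ^ q - Const (b0 ^ p * b1 ^ q) * Ny)"
    using obtain_monomial_normal_form[OF nonzero(2), of j "Var Y0" "Var Y1"] by (auto simp: Ly_def)
  obtain Nz where Nz: "\<And>p q. p + q = k \<Longrightarrow>
      Lz (c0, c1) dvd (Var Z0 ^ p * Var Z1 ^ q - Const (c0 ^ p * c1 ^ q) * Nz)"
    using obtain_monomial_normal_form[OF nonzero(3), of k "Var Z0" "Var Z1"] by (auto simp: Lz_def)
  have "mon m - Const (mon_val P m) * (Nx * Ny * Nz) \<in> ideal_pt P" if "mdeg m = (i, j, k)" for m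
  proof -
    have "mon m - Const (mon_val P m) * (Nx * Ny * Nz)
        = (Var X0 ^ Poly_Mapping.lookup m X0 * Var X1 ^ Poly_Mapping.lookup m X1)
          * (Var Y0 ^ Poly_Mapping.lookup m Y0 * Var Y1 ^ Poly_Mapping.lookup m Y1)
          * (Var Z0 ^ Poly_Mapping.lookup m Z0 * Var Z1 ^ Poly_Mapping.lookup m Z1)
        - (Const (a0 ^ Poly_Mapping.lookup m X0 * a1 ^ Poly_Mapping.lookup m X1) * Nx)
          * (Const (b0 ^ Poly_Mapping.lookup m Y0 * b1 ^ Poly_Mapping.lookup m Y1) * Ny)
          * (Const (c0 ^ Poly_Mapping.lookup m Z0 * c1 ^ Poly_Mapping.lookup m Z1) * Nz)"
      by (simp add: mon_eq_Var_product mon_val_def P Const_mult algebra_simps)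
    also have "\<dots> \<in> ideal_pt P"
      using that unfolding ideal_pt_eq_ideal3 P
      by (intro ideal3_mult3_congruent ideal3_dvdI) (simp_all add: mdeg_def Nx Ny Nz)
    finally show ?thesis .
  qed
  then show ?thesis by (rule that)
qed

text \<open>\<open>F\<close> is congruent to \<open>F(P) N\<close> modulo \<open>I(P)\<close>, with \<open>N\<close> as in the previous lemma.\<close>
lemma Rdeg_vanishing_at_point_imp_ideal_pt:
  assumes "valid_pt P" and F: "F \<in> Rdeg i j k" and "eval P F = 0"
  shows "F \<in> ideal_pt P"
proof -
  obtain N where N: "\<And>m. mdeg m = (i, j, k) \<Longrightarrow> mon m - Const (mon_val P m) * N \<in> ideal_pt P"
    using obtain_monomial_normal_form_mod_ideal_pt[OF assms(1)] by blast
  have "F - Const (eval P F) * N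
      = (\<Sum>m\<in>Poly_Mapping.keys F. Const (Poly_Mapping.lookup F m) * (mon m - Const (mon_val P m) * N))"
    by (subst (1) mpoly6_eq_sum_monomials)
       (simp add: eval_def Const_sum Const_mult sum_distrib_left sum_distrib_right sum_subtractf
         algebra_simps)
  also have "\<dots> \<in> ideal_pt P"
    using F N unfolding ideal_pt_eq_ideal3 by (intro ideal3_sum ideal3_mult) (auto simp: Rdeg_def)
  finally show ?thesis
    using assms(3) by (simp add: Const_0)
qed

lemma (in vector_space) span_inter_span_eq_zero:
  assumes "finite A" "finite B" "independent (A \<union> B)" "A \<inter> B = {}"
    and "x \<in> span A" "x \<in> span B"
  shows "x = 0"
proof -
  obtain u where u: "x = (\<Sum>a\<in>A. u a *s a)" using assms(1,5) span_finite by auto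
  obtain w where w: "x = (\<Sum>b\<in>B. w b *s b)" using assms(2,6) span_finite by auto
  define h where "h v = (if v \<in> A then u v else - w v)" for v
  have "(\<Sum>v\<in>A \<union> B. h v *s v) = (\<Sum>a\<in>A. h a *s a) + (\<Sum>b\<in>B. h b *s b)"
    using assms(1,2,4) by (rule sum.union_disjoint)
  also have "(\<Sum>a\<in>A. h a *s a) = (\<Sum>a\<in>A. u a *s a)"
    by (simp add: h_def)
  also have "(\<Sum>b\<in>B. h b *s b) = (\<Sum>b\<in>B. - (w b *s b))"
    using assms(4) by (intro sum.cong) (auto simp: h_def)
  finally have "(\<Sum>v\<in>A \<union> B. h v *s v) = x - x"
    using u w by (simp add: sum_negf)
  then have "\<forall>v\<in>A \<union> B. h v = 0"
    using assms(1-3) dependent_finite[of "A \<union> B"] by auto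
  then have "\<forall>a\<in>A. u a = 0" by (simp add: h_def ball_Un)
  then show ?thesis using u by (simp add: sum.neutral)
qed

lemma (in Vector_Spaces.linear) span_image_Un_kernel:
  assumes "\<And>x. x \<in> K \<Longrightarrow> f x = 0"
  shows "vs2.span (f ` (C \<union> K)) = vs2.span (f ` C)"
proof -
  have "f ` (C \<union> K) \<subseteq> vs2.span (f ` C)"
    using assms vs2.span_zero vs2.span_base by fastforce
  then show ?thesis
    using vs2.span_minimal[of "f ` (C \<union> K)" "vs2.span (f ` C)"] vs2.span_mono[of "f ` C" "f ` (C \<union> K)"]
    by auto
qed

lemma rank_nullity_subspace:
  assumes lin: "Vector_Spaces.linear s1 s2 f"
    and V: "module.subspace s1 V" and W: "finite W" "V \<subseteq> module.span s1 W"
  shows "vector_space.dim s1 V = vector_space.dim s1 (V \<inter> {x. f x = 0}) + vector_space.dim s2 (f ` V)"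
proof -
  interpret lf: Vector_Spaces.linear s1 s2 f by (rule lin)
  define K where "K = V \<inter> {x. f x = 0}"
  obtain BK where BK: "BK \<subseteq> K" "lf.vs1.independent BK" "K \<subseteq> lf.vs1.span BK" "card BK = lf.vs1.dim K"
    by (rule lf.vs1.basis_exists)
  obtain B where B: "BK \<subseteq> B" "B \<subseteq> V" "lf.vs1.independent B" "V \<subseteq> lf.vs1.span B"
    using lf.vs1.maximal_independent_subset_extend[of BK V] BK(1,2) by (auto simp: K_def)
  have "finite B" using lf.vs1.independent_span_bound[OF W(1) B(3)] B(2) W(2) by blast
  define C where "C = B - BK"
  have BC: "B = C \<union> BK" "C \<inter> BK = {}" using B(1) by (auto simp: C_def)
  have fin: "finite C" "finite BK" using \<open>finite B\<close> BC(1) by auto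
  have spanB: "lf.vs1.span B = V" using lf.vs1.span_subspace[OF B(2,4) V] .
  have inj: "inj_on f (lf.vs1.span C)"
    unfolding lf.inj_on_iff_eq_0[OF lf.vs1.subspace_span]
  proof (intro ballI impI)
    fix x assume x: "x \<in> lf.vs1.span C" and "f x = 0"
    then have "x \<in> K" using spanB lf.vs1.span_mono[of C B] BC(1) by (auto simp: K_def)
    then have "x \<in> lf.vs1.span BK" using BK(3) by blast
    then show "x = 0"
      using lf.vs1.span_inter_span_eq_zero[OF fin _ BC(2) x] B(3) BC(1) by simp
  qed
  have "f ` V = lf.vs2.span (f ` C)"
    using lf.span_image[of B] lf.span_image_Un_kernel[of BK C] spanB BC(1) BK(1) by (auto simp: K_def)
  moreover have "lf.vs2.independent (f ` C)"
    using lf.independent_injective_image[OF _ inj] lf.vs1.independent_mono[OF B(3)] BC(1) by blast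
  ultimately have "lf.vs2.dim (f ` V) = card C"
    using lf.vs2.dim_eq_card_independent card_image[OF inj_on_subset[OF inj lf.vs1.span_superset]]
    by simp
  moreover have "lf.vs1.dim V = card C + card BK"
    using lf.vs1.basis_card_eq_dim[OF B(2,4,3)] BC fin by (simp add: card_Un_disjoint)
  ultimately show ?thesis using BK(4) by (simp add: K_def)
qed

lemma (in vector_space) card_le_dim_if_independent:
  assumes "G \<subseteq> V" "independent G" "finite W" "V \<subseteq> span W"
  shows "card G \<le> dim V"
proof -
  obtain B where B: "B \<subseteq> V" "independent B" "V \<subseteq> span B" "card B = dim V"
    by (rule basis_exists)
  have "finite B" using independent_span_bound[OF assms(3) B(2)] B(1) assms(4) by blast
  then show ?thesis using independent_span_bound[OF _ assms(2)] assms(1) B(3,4) by fastforce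
qed

definition scale_fun :: "'a::field \<Rightarrow> ('p \<Rightarrow> 'a) \<Rightarrow> 'p \<Rightarrow> 'a" where
  "scale_fun c g = (\<lambda>x. c * g x)"

interpretation Fun: vector_space "scale_fun :: 'a::field \<Rightarrow> ('p \<Rightarrow> 'a) \<Rightarrow> 'p \<Rightarrow> 'a"
  by unfold_locales (auto simp: scale_fun_def algebra_simps)

lemma sum_fun_apply: "(sum f A) x = (\<Sum>a\<in>A. f a x)"
  by (induct A rule: infinite_finite_induct) auto

lemma independent_if_diagonal:
  fixes g :: "'p \<Rightarrow> 'p \<Rightarrow> 'a::field"
  assumes "finite S"
    and diag: "\<And>P. P \<in> S \<Longrightarrow> g P P \<noteq> 0"
    and off_diag: "\<And>P Q. P \<in> S \<Longrightarrow> Q \<in> S \<Longrightarrow> Q \<noteq> P \<Longrightarrow> g P Q = 0"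
  shows "inj_on g S" "Fun.independent (g ` S)"
proof -
  show "inj_on g S"
    by (rule inj_onI) (metis diag off_diag)
  show "Fun.independent (g ` S)"
    unfolding Fun.dependent_finite[OF finite_imageI[OF \<open>finite S\<close>]]
  proof clarify
    fix u P assume P: "P \<in> S" and "u (g P) \<noteq> 0" and "(\<Sum>v\<in>g ` S. scale_fun (u v) v) = 0"
    then have "0 = (\<Sum>v\<in>g ` S. u v * v P)"
      by (metis (no_types, lifting) scale_fun_def sum.cong sum_fun_apply zero_fun_def)
    also have "\<dots> = u (g P) * g P P + (\<Sum>v\<in>g ` S - {g P}. u v * v P)"
      using sum.remove[OF finite_imageI[OF \<open>finite S\<close>] imageI[OF P]] by simp
    also have "(\<Sum>v\<in>g ` S - {g P}. u v * v P) = 0"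
      using P off_diag by (intro sum.neutral) auto
    finally show False using \<open>u (g P) \<noteq> 0\<close> diag[OF P] by simp
  qed
qed

section \<open>The Hilbert function as the dimension of an evaluation image\<close>

definition eval_on :: "'a::field pt3 set \<Rightarrow> 'a mpoly6 \<Rightarrow> 'a pt3 \<Rightarrow> 'a" where
  "eval_on A F = (\<lambda>Q. if Q \<in> A then eval Q F else 0)"

lemma Rdeg_kernel_eval_on:
  assumes "point_set X"
  shows "Rdeg i j k \<inter> {F. eval_on X F = 0} = ideal_X X \<inter> Rdeg i j k"
proof -
  have "F \<in> ideal_pt P \<longleftrightarrow> eval P F = 0" if "P \<in> X" "F \<in> Rdeg i j k" for P F
    using assms that Rdeg_vanishing_at_point_imp_ideal_pt eval_ideal_pt
    by (metis point_set_def)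
  then show ?thesis
    by (auto simp: ideal_X_def eval_on_def fun_eq_iff)
qed

lemma linear_eval_on: "Vector_Spaces.linear scaleR6 scale_fun (eval_on A)"
  by (auto simp: Vector_Spaces.linear_def module_hom_def module_hom_axioms_def
      R.vector_space_axioms Fun.vector_space_axioms module_iff_vector_space eval_on_def
      eval_add eval_mult eval_Const scaleR6_eq_Const_mult scale_fun_def fun_eq_iff)

lemma eval_on_Rdeg_subset_span:
  "eval_on A ` Rdeg i j k \<subseteq> Fun.span (eval_on A ` mon ` {m. mdeg m = (i, j, k)})"
proof -
  interpret Vector_Spaces.linear scaleR6 scale_fun "eval_on A" by (rule linear_eval_on)
  show ?thesis using Rdeg_subset_span_monomials span_image by (metis image_mono)
qed

lemma HX_eq_dim_eval_image:
  fixes X :: "'a::field pt3 set"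
  assumes "point_set X"
  shows "HX X (int i) (int j) (int k) = int (Fun.dim (eval_on X ` Rdeg i j k))"
proof -
  have "R.dim (Rdeg i j k :: 'a mpoly6 set)
      = R.dim (Rdeg i j k \<inter> {F. eval_on X F = 0}) + Fun.dim (eval_on X ` Rdeg i j k)"
    by (rule rank_nullity_subspace[OF linear_eval_on Rdeg_subspace finite_imageI[OF finite_mdeg]
          Rdeg_subset_span_monomials])
  then show ?thesis by (simp add: HX_def vdim_def Rdeg_kernel_eval_on[OF assms])
qed

section \<open>Fibres of the projection to the first two factors\<close>

definition fibre12 :: "'a::field pt3 set \<Rightarrow> 'a pt3 \<Rightarrow> 'a pt3 set" where
  "fibre12 X P = {Q \<in> X. proj_eq (fst Q) (fst P) \<and> proj_eq (fst (snd Q)) (fst (snd P))}"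

definition fibres12 :: "'a::field pt3 set \<Rightarrow> 'a pt3 set set" where
  "fibres12 X = fibre12 X ` X"

lemma valid_ptD: "valid_pt P \<Longrightarrow> fst P \<noteq> (0, 0) \<and> fst (snd P) \<noteq> (0, 0) \<and> snd (snd P) \<noteq> (0, 0)"
  by (cases P) (auto simp: valid_pt_def)

lemma point_set_nonzero:
  assumes "point_set X" "R \<in> X"
  shows "fst R \<noteq> (0, 0)" "fst (snd R) \<noteq> (0, 0)" "snd (snd R) \<noteq> (0, 0)"
  using assms valid_ptD unfolding point_set_def by blast+

lemma fibre12_self: "P \<in> X \<Longrightarrow> P \<in> fibre12 X P"
  by (simp add: fibre12_def proj_eq_refl)

lemma fibre12_subset: "fibre12 X P \<subseteq> X"
  by (auto simp: fibre12_def)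

lemma finite_fibre12: "point_set X \<Longrightarrow> finite (fibre12 X P)"
  using fibre12_subset by (metis point_set_def finite_subset)

lemma finite_fibres12: "point_set X \<Longrightarrow> finite (fibres12 X)"
  by (simp add: fibres12_def point_set_def)

lemma fibre12_eq:
  assumes "point_set X" "Q \<in> fibre12 X P" "P \<in> X"
  shows "fibre12 X Q = fibre12 X P"
proof -
  have "valid_pt P" "valid_pt Q" using assms by (auto simp: point_set_def fibre12_def)
  then show ?thesis
    using assms(2) unfolding fibre12_def using valid_ptD proj_eq_trans proj_eq_sym by blast
qed

lemma mem_fibres12_iff:
  assumes "point_set X" "\<Phi> \<in> fibres12 X" "Q \<in> X"
  shows "Q \<in> \<Phi> \<longleftrightarrow> \<Phi> = fibre12 X Q"
  using assms fibre12_eq fibre12_self unfolding fibres12_def by blast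

lemma Union_fibres12: "\<Union> (fibres12 X) = X"
  using fibre12_self fibre12_subset unfolding fibres12_def by blast

lemma pairwise_disjnt_fibres12:
  assumes "point_set X"
  shows "pairwise disjnt (fibres12 X)"
proof (rule pairwiseI)
  fix \<Phi> \<Psi> assume \<Phi>: "\<Phi> \<in> fibres12 X" and \<Psi>: "\<Psi> \<in> fibres12 X" and "\<Phi> \<noteq> \<Psi>"
  have "Q \<notin> \<Psi>" if "Q \<in> \<Phi>" for Q
  proof -
    have "Q \<in> X" using that \<Phi> fibre12_subset unfolding fibres12_def by blast
    then show ?thesis
      using that \<open>\<Phi> \<noteq> \<Psi>\<close> mem_fibres12_iff[OF assms \<Phi>] mem_fibres12_iff[OF assms \<Psi>] by blast
  qed
  then show "disjnt \<Phi> \<Psi>" by (auto simp: disjnt_def)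
qed

lemma fibre12_z_distinct:
  assumes "point_set X" "Q \<in> fibre12 X P" "Q \<noteq> P" "P \<in> X"
  shows "\<not> proj_eq (snd (snd Q)) (snd (snd P))"
  using assms by (auto simp: point_set_def fibre12_def same_point_def)

lemma Union_subsets_fibres12_inter_fibre12:
  assumes X: "point_set X" and T: "\<And>\<Phi>. \<Phi> \<in> fibres12 X \<Longrightarrow> T \<Phi> \<subseteq> \<Phi>" and "P \<in> X"
  shows "(\<Union>\<Phi>\<in>fibres12 X. T \<Phi>) \<inter> fibre12 X P = T (fibre12 X P)"
proof
  have fibP: "fibre12 X P \<in> fibres12 X" using assms(3) by (simp add: fibres12_def)
  show "(\<Union>\<Phi>\<in>fibres12 X. T \<Phi>) \<inter> fibre12 X P \<subseteq> T (fibre12 X P)"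
  proof clarify
    fix x \<Phi> assume \<Phi>: "\<Phi> \<in> fibres12 X" and x: "x \<in> T \<Phi>" "x \<in> fibre12 X P"
    have "x \<in> X" using x(2) fibre12_subset by blast
    have "\<Phi> = fibre12 X x" using mem_fibres12_iff[OF X \<Phi> \<open>x \<in> X\<close>] T[OF \<Phi>] x(1) by blast
    moreover have "fibre12 X P = fibre12 X x" using mem_fibres12_iff[OF X fibP \<open>x \<in> X\<close>] x(2) by blast
    ultimately show "x \<in> T (fibre12 X P)" using x(1) by simp
  qed
  show "T (fibre12 X P) \<subseteq> (\<Union>\<Phi>\<in>fibres12 X. T \<Phi>) \<inter> fibre12 X P" using T[OF fibP] fibP by blast
qed

lemma card_Union_subsets_fibres12:
  assumes X: "point_set X" and T: "\<And>\<Phi>. \<Phi> \<in> fibres12 X \<Longrightarrow> T \<Phi> \<subseteq> \<Phi>"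
  shows "card (\<Union>\<Phi>\<in>fibres12 X. T \<Phi>) = (\<Sum>\<Phi>\<in>fibres12 X. card (T \<Phi>))"
proof (rule card_UN_disjoint[OF finite_fibres12[OF X]])
  show "\<forall>\<Phi>\<in>fibres12 X. finite (T \<Phi>)"
  proof
    fix \<Phi> assume "\<Phi> \<in> fibres12 X"
    then have "finite \<Phi>" using finite_fibre12[OF X] by (auto simp: fibres12_def)
    then show "finite (T \<Phi>)" using T[OF \<open>\<Phi> \<in> fibres12 X\<close>] finite_subset by blast
  qed
  show "\<forall>\<Phi>\<in>fibres12 X. \<forall>\<Psi>\<in>fibres12 X. \<Phi> \<noteq> \<Psi> \<longrightarrow> T \<Phi> \<inter> T \<Psi> = {}"
  proof (intro ballI impI)
    fix \<Phi> \<Psi> assume "\<Phi> \<in> fibres12 X" "\<Psi> \<in> fibres12 X" "\<Phi> \<noteq> \<Psi>"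
    then have "\<Phi> \<inter> \<Psi> = {}"
      using pairwise_disjnt_fibres12[OF X] by (auto simp: pairwise_def disjnt_def)
    then show "T \<Phi> \<inter> T \<Psi> = {}" using T[OF \<open>\<Phi> \<in> fibres12 X\<close>] T[OF \<open>\<Psi> \<in> fibres12 X\<close>] by blast
  qed
qed

section \<open>An upper bound through the fibres\<close>

lemma eval_on_Union:
  assumes "finite \<A>" "pairwise disjnt \<A>"
  shows "eval_on (\<Union>\<A>) F = (\<Sum>A\<in>\<A>. eval_on A F)"
proof
  fix Q
  have "(\<Sum>A\<in>\<A>. eval_on A F) Q = (\<Sum>A\<in>\<A>. if Q \<in> A then eval Q F else 0)"
    by (simp add: sum_fun_apply eval_on_def)
  also have "\<dots> = eval_on (\<Union>\<A>) F Q"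
  proof (cases "Q \<in> \<Union>\<A>")
    case True
    then obtain A0 where "A0 \<in> \<A>" "Q \<in> A0" by blast
    then have "Q \<in> A \<longleftrightarrow> A = A0" if "A \<in> \<A>" for A
      using assms(2) that unfolding pairwise_def disjnt_def by blast
    then have "(\<Sum>A\<in>\<A>. if Q \<in> A then eval Q F else 0) = (\<Sum>A\<in>\<A>. if A = A0 then eval Q F else 0)"
      by (intro sum.cong) auto
    then show ?thesis
      using True \<open>A0 \<in> \<A>\<close> assms(1) by (simp add: eval_on_def)
  qed (auto simp: eval_on_def)
  finally show "eval_on (\<Union>\<A>) F Q = (\<Sum>A\<in>\<A>. eval_on A F) Q" ..
qed

lemma eval_on_Rdeg_subset_span_if_monomials:
  assumes "\<And>m. mdeg m = (i, j, k) \<Longrightarrow> eval_on A (mon m) \<in> Fun.span W"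
  shows "eval_on A ` Rdeg i j k \<subseteq> Fun.span W"
proof -
  have "eval_on A ` mon ` {m. mdeg m = (i, j, k)} \<subseteq> Fun.span W" using assms by auto
  then have "Fun.span (eval_on A ` mon ` {m. mdeg m = (i, j, k)}) \<subseteq> Fun.span W"
    by (rule Fun.span_minimal[OF _ Fun.subspace_span])
  with eval_on_Rdeg_subset_span show ?thesis by (rule subset_trans)
qed

lemma mon_val_rescale:
  assumes "mdeg m = (i, j, k)"
  shows "mon_val ((l * a0, l * a1), (u * b0, u * b1), (c0, c1)) m
       = mon_val ((a0, a1), (b0, b1), (1, 1)) m
         * (l ^ i * u ^ j * c0 ^ Poly_Mapping.lookup m Z0 * c1 ^ (k - Poly_Mapping.lookup m Z0))"
proof -
  have "i = Poly_Mapping.lookup m X0 + Poly_Mapping.lookup m X1"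
    "j = Poly_Mapping.lookup m Y0 + Poly_Mapping.lookup m Y1"
    "k - Poly_Mapping.lookup m Z0 = Poly_Mapping.lookup m Z1"
    using assms by (auto simp: mdeg_def)
  then show ?thesis
    by (simp add: mon_val_def power_mult_distrib power_add ac_simps)
qed

lemma eval_on_in_span_indicators:
  assumes "finite A"
  shows "eval_on A F \<in> Fun.span ((\<lambda>Q x. if x = Q then 1 else 0) ` A)"
proof -
  have "eval_on A F = (\<Sum>Q\<in>A. scale_fun (eval Q F) (\<lambda>x. if x = Q then 1 else 0))"
  proof
    fix x
    have "(\<Sum>Q\<in>A. scale_fun (eval Q F) (\<lambda>x. if x = Q then 1 else 0)) x
        = (\<Sum>Q\<in>A. if x = Q then eval Q F else 0)"
      by (simp add: sum_fun_apply scale_fun_def) (rule sum.cong, auto)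
    then show "eval_on A F x = (\<Sum>Q\<in>A. scale_fun (eval Q F) (\<lambda>x. if x = Q then 1 else 0)) x"
      using assms by (simp add: eval_on_def)
  qed
  also have "\<dots> \<in> Fun.span ((\<lambda>Q x. if x = Q then 1 else 0) ` A)"
    by (intro Fun.span_sum Fun.span_scale Fun.span_base imageI)
  finally show ?thesis .
qed

text \<open>On a fibre the first two coordinates are multiples of those of \<open>P\<close>, so a monomial of
  multidegree \<open>(i,j,k)\<close> restricts to a multiple of one of \<open>k + 1\<close> functions, chosen by its
  exponent of \<open>z\<^sub>0\<close>.\<close>
lemma obtain_eval_on_fibre12_span:
  assumes X: "point_set X" and "P \<in> X"
  obtains h where "eval_on (fibre12 X P) ` Rdeg i j k \<subseteq> Fun.span (h ` {..k})"
proof -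
  obtain a b c where P: "P = (a, b, c)" by (cases P)
  have ab: "a \<noteq> (0, 0)" "b \<noteq> (0, 0)"
    using point_set_nonzero[OF X assms(2)] by (simp_all add: P)
  define h where "h e = (\<lambda>Q. if Q \<in> fibre12 X P
      then proj_ratio (fst Q) a ^ i * proj_ratio (fst (snd Q)) b ^ j
        * fst (snd (snd Q)) ^ e * snd (snd (snd Q)) ^ (k - e)
      else 0)" for e
  have "eval_on (fibre12 X P) (mon m)
      = scale_fun (mon_val (a, b, (1, 1)) m) (h (Poly_Mapping.lookup m Z0))"
    if m: "mdeg m = (i, j, k)" for m
  proof
    fix Q :: "'a pt3"
    show "eval_on (fibre12 X P) (mon m) Q
        = scale_fun (mon_val (a, b, (1, 1)) m) (h (Poly_Mapping.lookup m Z0)) Q"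
    proof (cases "Q \<in> fibre12 X P")
      case True
      obtain q r c0 c1 where Q: "Q = (q, r, (c0, c1))" by (metis prod.exhaust)
      have "proj_eq q a" "proj_eq r b" using True by (simp_all add: fibre12_def P Q)
      then have "q = (proj_ratio q a * fst a, proj_ratio q a * snd a)"
        "r = (proj_ratio r b * fst b, proj_ratio r b * snd b)"
        using proj_eq_imp_multiple ab by blast+
      then have "mon_val Q m = mon_val (a, b, (1, 1)) m * (proj_ratio q a ^ i * proj_ratio r b ^ j
          * c0 ^ Poly_Mapping.lookup m Z0 * c1 ^ (k - Poly_Mapping.lookup m Z0))"
        using mon_val_rescale[OF m, of "proj_ratio q a" "fst a" "snd a" "proj_ratio r b" "fst b" "snd b"]
        by (simp add: Q)
      then show ?thesis
        using True by (simp add: eval_on_def eval_mon scale_fun_def h_def Q)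
    qed (simp add: eval_on_def scale_fun_def h_def)
  qed
  moreover have "Poly_Mapping.lookup m Z0 \<le> k" if "mdeg m = (i, j, k)" for m
    using that by (auto simp: mdeg_def)
  ultimately have "eval_on (fibre12 X P) ` Rdeg i j k \<subseteq> Fun.span (h ` {..k})"
    by (intro eval_on_Rdeg_subset_span_if_monomials) (simp add: Fun.span_scale Fun.span_base)
  then show ?thesis by (rule that)
qed

lemma obtain_eval_on_fibre12_small_span:
  assumes X: "point_set X" and \<Phi>: "\<Phi> \<in> fibres12 X"
  obtains W where "finite W" "card W \<le> min (k + 1) (card \<Phi>)" "eval_on \<Phi> ` Rdeg i j k \<subseteq> Fun.span W"
proof -
  obtain P where P: "P \<in> X" "\<Phi> = fibre12 X P" using \<Phi> by (auto simp: fibres12_def)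
  have "finite \<Phi>" using finite_fibre12[OF X] P by simp
  show ?thesis
  proof (cases "card \<Phi> \<le> k + 1")
    case True
    then show ?thesis
      using that[of "(\<lambda>Q x. if x = Q then 1 else 0) ` \<Phi>"] eval_on_in_span_indicators[OF \<open>finite \<Phi>\<close>]
        card_image_le[OF \<open>finite \<Phi>\<close>] \<open>finite \<Phi>\<close> by auto
  next
    case False
    obtain h where "eval_on \<Phi> ` Rdeg i j k \<subseteq> Fun.span (h ` {..k})"
      using obtain_eval_on_fibre12_span[OF X P(1)] P(2) by blast
    then show ?thesis
      using that[of "h ` {..k}"] False card_image_le[of "{..k}" h] by simp
  qed
qed

lemma dim_eval_image_le:
  assumes X: "point_set X"
  shows "Fun.dim (eval_on X ` Rdeg i j k) \<le> (\<Sum>\<Phi>\<in>fibres12 X. min (k + 1) (card \<Phi>))"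
proof -
  have "\<forall>\<Phi>\<in>fibres12 X. \<exists>W. finite W \<and> card W \<le> min (k + 1) (card \<Phi>)
      \<and> eval_on \<Phi> ` Rdeg i j k \<subseteq> Fun.span W"
    using obtain_eval_on_fibre12_small_span[OF X] by (metis (no_types))
  then obtain W where W: "\<And>\<Phi>. \<Phi> \<in> fibres12 X \<Longrightarrow> finite (W \<Phi>) \<and> card (W \<Phi>) \<le> min (k + 1) (card \<Phi>)
      \<and> eval_on \<Phi> ` Rdeg i j k \<subseteq> Fun.span (W \<Phi>)"
    by (auto dest!: bchoice)
  have "eval_on X ` Rdeg i j k \<subseteq> Fun.span (\<Union>\<Phi>\<in>fibres12 X. W \<Phi>)"
  proof clarify
    fix F :: "'a mpoly6" assume "F \<in> Rdeg i j k"
    have in_span: "eval_on \<Phi> F \<in> Fun.span (\<Union>\<Phi>\<in>fibres12 X. W \<Phi>)" if "\<Phi> \<in> fibres12 X" for \<Phi>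
    proof -
      have "W \<Phi> \<subseteq> (\<Union>\<Phi>\<in>fibres12 X. W \<Phi>)" using that by blast
      moreover have "eval_on \<Phi> F \<in> Fun.span (W \<Phi>)" using W[OF that] \<open>F \<in> Rdeg i j k\<close> by blast
      ultimately show ?thesis using Fun.span_mono by blast
    qed
    have "eval_on X F = (\<Sum>\<Phi>\<in>fibres12 X. eval_on \<Phi> F)"
      using eval_on_Union[OF finite_fibres12[OF X] pairwise_disjnt_fibres12[OF X], of F]
      by (simp only: Union_fibres12)
    then show "eval_on X F \<in> Fun.span (\<Union>\<Phi>\<in>fibres12 X. W \<Phi>)"
      using in_span by (simp add: Fun.span_sum)
  qed
  then have "Fun.dim (eval_on X ` Rdeg i j k) \<le> card (\<Union>\<Phi>\<in>fibres12 X. W \<Phi>)"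
    using W finite_fibres12[OF X] by (intro Fun.dim_le_card) auto
  also have "\<dots> \<le> (\<Sum>\<Phi>\<in>fibres12 X. card (W \<Phi>))"
    using card_UN_le[OF finite_fibres12[OF X]] .
  also have "\<dots> \<le> (\<Sum>\<Phi>\<in>fibres12 X. min (k + 1) (card \<Phi>))"
    using W by (intro sum_mono) auto
  finally show ?thesis .
qed

section \<open>A lower bound through separators\<close>

definition rep :: "('a \<times> 'a) set \<Rightarrow> 'a \<times> 'a" where
  "rep A = (SOME v. v \<in> A)"

lemma rep_p1class:
  fixes v :: "'a::field \<times> 'a"
  assumes "v \<noteq> (0, 0)"
  shows "rep (p1class v) \<noteq> (0, 0)" "proj_eq (rep (p1class v)) v" "p1class (rep (p1class v)) = p1class v"
proof -
  have "v \<in> p1class v" using assms by (simp add: p1class_def proj_eq_refl)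
  then have "rep (p1class v) \<in> p1class v" unfolding rep_def by (rule someI)
  then show r: "rep (p1class v) \<noteq> (0, 0)" and "proj_eq (rep (p1class v)) v"
    by (simp_all add: p1class_def)
  then show "p1class (rep (p1class v)) = p1class v"
    using p1class_eq_iff[OF r assms] by simp
qed

definition class_separator ::
    "('a::field \<times> 'a \<Rightarrow> 'a mpoly6) \<Rightarrow> ('a pt3 \<Rightarrow> 'a \<times> 'a) \<Rightarrow> 'a pt3 set \<Rightarrow> 'a pt3 \<Rightarrow> 'a mpoly6" where
  "class_separator L \<pi> X P = (\<Prod>A\<in>(\<lambda>Q. p1class (\<pi> Q)) ` X - {p1class (\<pi> P)}. L (rep A))"

lemma eval_class_separator_eq_0_iff:
  assumes "finite X" "\<And>R. R \<in> X \<Longrightarrow> \<pi> R \<noteq> (0, 0)"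
    and L: "\<And>Q u. eval Q (L u) = 0 \<longleftrightarrow> proj_eq (\<pi> Q) u"
    and "P \<in> X" "Q \<in> X"
  shows "eval Q (class_separator L \<pi> X P) = 0 \<longleftrightarrow> p1class (\<pi> Q) \<noteq> p1class (\<pi> P)"
proof -
  let ?C = "(\<lambda>Q. p1class (\<pi> Q)) ` X - {p1class (\<pi> P)}"
  have "eval Q (class_separator L \<pi> X P) = 0 \<longleftrightarrow> (\<exists>A\<in>?C. proj_eq (\<pi> Q) (rep A))"
    using assms(1) by (simp add: class_separator_def eval_prod L)
  also have "\<dots> \<longleftrightarrow> (\<exists>A\<in>?C. p1class (\<pi> Q) = A)"
  proof (intro bex_cong refl)
    fix A assume "A \<in> ?C"
    then obtain R where R: "R \<in> X" "A = p1class (\<pi> R)" by blast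
    note rep = rep_p1class[OF assms(2)[OF R(1)]]
    show "proj_eq (\<pi> Q) (rep A) \<longleftrightarrow> p1class (\<pi> Q) = A"
      using p1class_eq_iff[OF assms(2)[OF \<open>Q \<in> X\<close>] rep(1)] rep(3) R(2) by simp
  qed
  also have "\<dots> \<longleftrightarrow> p1class (\<pi> Q) \<noteq> p1class (\<pi> P)"
    using assms(5) by auto
  finally show ?thesis .
qed

lemma Rdeg_class_separator:
  fixes \<pi> :: "'a::field pt3 \<Rightarrow> 'a \<times> 'a"
  assumes "finite X" "P \<in> X" "\<And>u. L u \<in> Rdeg a b c"
  defines "n \<equiv> card ((\<lambda>Q. p1class (\<pi> Q)) ` X) - 1"
  shows "class_separator L \<pi> X P \<in> Rdeg (n * a) (n * b) (n * c)"
  unfolding class_separator_def n_def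
  using Rdeg_prod[of "(\<lambda>Q. p1class (\<pi> Q)) ` X - {p1class (\<pi> P)}" "\<lambda>A. L (rep A)"] assms(1-3)
  by (simp add: card_Diff_singleton)

text \<open>The last factor, a variable not vanishing at \<open>P\<close>, pads the \<open>z\<close>-degree up to \<open>k\<close>.\<close>
definition separator :: "'a::field pt3 set \<Rightarrow> 'a pt3 set \<Rightarrow> nat \<Rightarrow> 'a pt3 \<Rightarrow> 'a mpoly6" where
  "separator X S k P =
     class_separator Lx fst X P * class_separator Ly (\<lambda>Q. fst (snd Q)) X P
     * (\<Prod>Q\<in>S \<inter> fibre12 X P - {P}. Lz (snd (snd Q)))
     * (if fst (snd (snd P)) \<noteq> 0 then Var Z0 else Var Z1) ^ (k + 1 - card (S \<inter> fibre12 X P))"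

lemma Rdeg_separator:
  assumes X: "point_set X" and "S \<subseteq> X" "P \<in> S" "card (S \<inter> fibre12 X P) \<le> k + 1"
  shows "separator X S k P \<in> Rdeg (t1 X - 1) (t2 X - 1) k"
proof -
  have "finite X" "P \<in> X" using X assms(2,3) by (auto simp: point_set_def)
  let ?T = "S \<inter> fibre12 X P"
  have "finite ?T" "P \<in> ?T" using finite_fibre12[OF X] assms(3) fibre12_self[OF \<open>P \<in> X\<close>] by auto
  then have k: "card (?T - {P}) + (k + 1 - card ?T) = k"
    using assms(4) card_Diff_singleton[of P ?T] card_gt_0_iff[of ?T] by auto
  have "class_separator Lx fst X P \<in> Rdeg (t1 X - 1) 0 0"
    using Rdeg_class_separator[where \<pi> = fst, OF \<open>finite X\<close> \<open>P \<in> X\<close> Rdeg_Lx] by (simp add: t1_def)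
  moreover have "class_separator Ly (\<lambda>Q. fst (snd Q)) X P \<in> Rdeg 0 (t2 X - 1) 0"
    using Rdeg_class_separator[where \<pi> = "\<lambda>Q. fst (snd Q)", OF \<open>finite X\<close> \<open>P \<in> X\<close> Rdeg_Ly]
    by (simp add: t2_def)
  moreover have "(\<Prod>Q\<in>?T - {P}. Lz (snd (snd Q))) \<in> Rdeg 0 0 (card (?T - {P}))"
    using Rdeg_prod[of "?T - {P}" "\<lambda>Q. Lz (snd (snd Q))", OF Rdeg_Lz] by simp
  moreover have "(if fst (snd (snd P)) \<noteq> 0 then Var Z0 else Var Z1) ^ (k + 1 - card ?T)
      \<in> Rdeg 0 0 (k + 1 - card ?T)"
    using Rdeg_power[OF Rdeg_Var(5)] Rdeg_power[OF Rdeg_Var(6)] by auto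
  ultimately have "separator X S k P \<in> Rdeg (t1 X - 1 + 0 + 0 + 0) (0 + (t2 X - 1) + 0 + 0)
      (0 + 0 + card (?T - {P}) + (k + 1 - card ?T))"
    unfolding separator_def by (intro Rdeg_mult)
  then show ?thesis using k by simp
qed

lemma eval_separator_self:
  assumes X: "point_set X" and "P \<in> X"
  shows "eval P (separator X S k P) \<noteq> 0"
proof -
  have "finite X" "valid_pt P" using X assms(2) by (auto simp: point_set_def)
  have "eval P (class_separator Lx fst X P) \<noteq> 0" "eval P (class_separator Ly (\<lambda>Q. fst (snd Q)) X P) \<noteq> 0"
    using eval_class_separator_eq_0_iff[OF \<open>finite X\<close> point_set_nonzero(1)[OF X] eval_Lx \<open>P \<in> X\<close> \<open>P \<in> X\<close>]
      eval_class_separator_eq_0_iff[OF \<open>finite X\<close> point_set_nonzero(2)[OF X] eval_Ly \<open>P \<in> X\<close> \<open>P \<in> X\<close>]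
    by simp_all
  moreover have "eval P (Lz (snd (snd R))) \<noteq> 0" if "R \<in> S \<inter> fibre12 X P - {P}" for R
  proof -
    have "\<not> proj_eq (snd (snd R)) (snd (snd P))"
      using that fibre12_z_distinct[OF X _ _ \<open>P \<in> X\<close>] by blast
    then show ?thesis by (auto simp: eval_Lz dest: proj_eq_sym)
  qed
  moreover have "eval P (if fst (snd (snd P)) \<noteq> 0 then Var Z0 else Var Z1) \<noteq> 0"
    using valid_ptD[OF \<open>valid_pt P\<close>] by (auto simp: eval_Var prod_eq_iff)
  ultimately show ?thesis
    using finite_fibre12[OF X] by (simp add: separator_def eval_mult eval_prod eval_power)
qed

lemma eval_separator_other:
  assumes X: "point_set X" and "S \<subseteq> X" "P \<in> X" "Q \<in> S" "Q \<noteq> P"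
  shows "eval Q (separator X S k P) = 0"
proof -
  have "finite X" "Q \<in> X" "valid_pt P" "valid_pt Q" using X assms(2-4) by (auto simp: point_set_def)
  show ?thesis
  proof (cases "p1class (fst Q) = p1class (fst P) \<and> p1class (fst (snd Q)) = p1class (fst (snd P))")
    case True
    then have "Q \<in> fibre12 X P"
      using \<open>Q \<in> X\<close> valid_ptD[OF \<open>valid_pt P\<close>] valid_ptD[OF \<open>valid_pt Q\<close>]
      by (auto simp: fibre12_def p1class_eq_iff)
    moreover have "eval Q (Lz (snd (snd Q))) = 0" by (simp add: eval_Lz proj_eq_refl)
    ultimately have "(\<Prod>R\<in>S \<inter> fibre12 X P - {P}. eval Q (Lz (snd (snd R)))) = 0"
      using finite_fibre12[OF X] \<open>Q \<in> S\<close> \<open>Q \<noteq> P\<close> by (intro prod_zero) auto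
    then show ?thesis by (simp add: separator_def eval_mult eval_prod)
  next
    case False
    have "eval Q (class_separator Lx fst X P) = 0 \<or> eval Q (class_separator Ly (\<lambda>Q. fst (snd Q)) X P) = 0"
      using False eval_class_separator_eq_0_iff[OF \<open>finite X\<close> point_set_nonzero(1)[OF X] eval_Lx \<open>P \<in> X\<close> \<open>Q \<in> X\<close>]
        eval_class_separator_eq_0_iff[OF \<open>finite X\<close> point_set_nonzero(2)[OF X] eval_Ly \<open>P \<in> X\<close> \<open>Q \<in> X\<close>]
      by blast
    then show ?thesis by (auto simp: separator_def eval_mult)
  qed
qed

lemma card_le_dim_eval_image:
  assumes X: "point_set X" and "S \<subseteq> X" and S: "\<And>P. P \<in> S \<Longrightarrow> card (S \<inter> fibre12 X P) \<le> k + 1"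
  shows "card S \<le> Fun.dim (eval_on X ` Rdeg (t1 X - 1) (t2 X - 1) k)"
proof -
  define g where "g P = eval_on X (separator X S k P)" for P
  have "finite S" using X assms(2) by (auto simp: point_set_def intro: finite_subset)
  have diag: "g P P \<noteq> 0" if "P \<in> S" for P
    using eval_separator_self[OF X, of P S k] assms(2) that by (auto simp: g_def eval_on_def)
  have off_diag: "g P Q = 0" if "P \<in> S" "Q \<in> S" "Q \<noteq> P" for P Q
    using eval_separator_other[OF X assms(2) _ that(2,3), of k] assms(2) that
    by (auto simp: g_def eval_on_def)
  have "inj_on g S" and indep: "Fun.independent (g ` S)"
    using independent_if_diagonal[of S g, OF \<open>finite S\<close> diag off_diag] by auto
  have "g ` S \<subseteq> eval_on X ` Rdeg (t1 X - 1) (t2 X - 1) k"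
    using Rdeg_separator[OF X assms(2) _ S] by (auto simp: g_def)
  then have "card (g ` S) \<le> Fun.dim (eval_on X ` Rdeg (t1 X - 1) (t2 X - 1) k)"
    by (rule Fun.card_le_dim_if_independent[OF _ indep _ eval_on_Rdeg_subset_span]) (simp add: finite_mdeg)
  then show ?thesis using card_image[OF \<open>inj_on g S\<close>] by simp
qed

lemma obtain_fibre12_selection:
  assumes X: "point_set X"
  obtains S where "S \<subseteq> X" "\<And>P. P \<in> X \<Longrightarrow> card (S \<inter> fibre12 X P) \<le> k + 1"
    "card S = (\<Sum>\<Phi>\<in>fibres12 X. min (k + 1) (card \<Phi>))"
proof -
  have "\<forall>\<Phi>\<in>fibres12 X. \<exists>T. T \<subseteq> \<Phi> \<and> card T = min (k + 1) (card \<Phi>)"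
    by (meson min.cobounded2 obtain_subset_with_card_n)
  then obtain T where T: "\<And>\<Phi>. \<Phi> \<in> fibres12 X \<Longrightarrow> T \<Phi> \<subseteq> \<Phi> \<and> card (T \<Phi>) = min (k + 1) (card \<Phi>)"
    by (auto dest!: bchoice)
  then have T_sub: "\<And>\<Phi>. \<Phi> \<in> fibres12 X \<Longrightarrow> T \<Phi> \<subseteq> \<Phi>" by blast
  show ?thesis
  proof (rule that)
    show "(\<Union>\<Phi>\<in>fibres12 X. T \<Phi>) \<subseteq> X" using T Union_fibres12[of X] by blast
    show "card ((\<Union>\<Phi>\<in>fibres12 X. T \<Phi>) \<inter> fibre12 X P) \<le> k + 1" if "P \<in> X" for P
      using Union_subsets_fibres12_inter_fibre12[OF X T_sub that] T[of "fibre12 X P"] that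
      by (simp add: fibres12_def)
    have "card (\<Union>\<Phi>\<in>fibres12 X. T \<Phi>) = (\<Sum>\<Phi>\<in>fibres12 X. card (T \<Phi>))"
      by (rule card_Union_subsets_fibres12[OF X T_sub])
    also have "\<dots> = (\<Sum>\<Phi>\<in>fibres12 X. min (k + 1) (card \<Phi>))"
      using T by (intro sum.cong) auto
    finally show "card (\<Union>\<Phi>\<in>fibres12 X. T \<Phi>) = (\<Sum>\<Phi>\<in>fibres12 X. min (k + 1) (card \<Phi>))" .
  qed
qed

lemma dim_eval_image_eq:
  assumes "point_set X"
  shows "Fun.dim (eval_on X ` Rdeg (t1 X - 1) (t2 X - 1) k) = (\<Sum>\<Phi>\<in>fibres12 X. min (k + 1) (card \<Phi>))"
proof -
  obtain S where S: "S \<subseteq> X" "\<And>P. P \<in> X \<Longrightarrow> card (S \<inter> fibre12 X P) \<le> k + 1"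
    and card_S: "card S = (\<Sum>\<Phi>\<in>fibres12 X. min (k + 1) (card \<Phi>))"
    using obtain_fibre12_selection[OF assms] by blast
  have "card S \<le> Fun.dim (eval_on X ` Rdeg (t1 X - 1) (t2 X - 1) k)"
    using card_le_dim_eval_image[OF assms S(1)] S by blast
  then show ?thesis
    using dim_eval_image_le[OF assms, of "t1 X - 1" "t2 X - 1" k] card_S by linarith
qed

lemma HX_fibre_degree:
  fixes X :: "'a::field pt3 set"
  assumes X: "point_set X" and "n \<ge> -1"
  shows "HX X (int (t1 X) - 1) (int (t2 X) - 1) n = int (\<Sum>\<Phi>\<in>fibres12 X. min (nat (n + 1)) (card \<Phi>))"
proof (cases "X = {} \<or> n = -1")
  case True
  then show ?thesis by (auto simp: HX_def t1_def fibres12_def)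
next
  case False
  then have "t1 X \<ge> 1" "t2 X \<ge> 1" "n \<ge> 0"
    using assms by (auto simp: t1_def t2_def Suc_le_eq card_gt_0_iff point_set_def)
  then have "HX X (int (t1 X) - 1) (int (t2 X) - 1) n
      = HX X (int (t1 X - 1)) (int (t2 X - 1)) (int (nat n))"
    by (simp add: of_nat_diff)
  also have "\<dots> = int (Fun.dim (eval_on X ` Rdeg (t1 X - 1) (t2 X - 1) (nat n)))"
    by (rule HX_eq_dim_eval_image[OF X])
  also have "\<dots> = int (\<Sum>\<Phi>\<in>fibres12 X. min (nat n + 1) (card \<Phi>))"
    by (simp only: dim_eval_image_eq[OF X])
  finally show ?thesis using \<open>n \<ge> 0\<close> by (simp add: nat_add_distrib)
qed

lemma sum_min_second_difference:
  assumes "finite A"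
  shows "2 * int (\<Sum>a\<in>A. min (k + 1) (c a)) - int (\<Sum>a\<in>A. min k (c a)) - int (\<Sum>a\<in>A. min (k + 2) (c a))
       = int (card {a\<in>A. c a = k + 1})"
proof -
  have "2 * int (\<Sum>a\<in>A. min (k + 1) (c a)) - int (\<Sum>a\<in>A. min k (c a)) - int (\<Sum>a\<in>A. min (k + 2) (c a))
      = (\<Sum>a\<in>A. 2 * int (min (k + 1) (c a)) - int (min k (c a)) - int (min (k + 2) (c a)))"
    by (simp add: sum_subtractf sum_distrib_left)
  also have "\<dots> = (\<Sum>a\<in>A. if c a = k + 1 then 1 else 0)"
    by (rule sum.cong) (auto simp: min_def)
  also have "\<dots> = int (card {a\<in>A. c a = k + 1})"
    using assms by (simp add: sum.inter_filter[symmetric])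
  finally show ?thesis .
qed

section \<open>Lines of type (1,1,0)\<close>

lemma orthogonal_iff_proj_eq:
  fixes l a q :: "'a::field \<times> 'a"
  assumes "l \<noteq> (0, 0)" "a \<noteq> (0, 0)" and la: "fst l * fst a + snd l * snd a = 0"
  shows "fst l * fst q + snd l * snd q = 0 \<longleftrightarrow> proj_eq q a"
proof -
  obtain l0 l1 a0 a1 q0 q1 where e: "l = (l0, l1)" "a = (a0, a1)" "q = (q0, q1)"
    by fastforce
  have la': "l0 * a0 + l1 * a1 = 0" using la by (simp add: e)
  have l01: "l0 \<noteq> 0 \<or> l1 \<noteq> 0" and a01: "a0 \<noteq> 0 \<or> a1 \<noteq> 0" using assms(1,2) by (simp_all add: e)
  have i1: "l0 * (q0 * a1 - q1 * a0) = a1 * (l0 * q0 + l1 * q1) - q1 * (l0 * a0 + l1 * a1)"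
    and i2: "l1 * (q0 * a1 - q1 * a0) = q0 * (l0 * a0 + l1 * a1) - a0 * (l0 * q0 + l1 * q1)"
    and i3: "a0 * (l0 * q0 + l1 * q1) = q0 * (l0 * a0 + l1 * a1) - l1 * (q0 * a1 - q1 * a0)"
    and i4: "a1 * (l0 * q0 + l1 * q1) = q1 * (l0 * a0 + l1 * a1) + l0 * (q0 * a1 - q1 * a0)"
    by (simp_all add: algebra_simps)
  show ?thesis unfolding e proj_eq_def fst_conv snd_conv
  proof
    assume lq: "l0 * q0 + l1 * q1 = 0"
    have "l0 * (q0 * a1 - q1 * a0) = 0" "l1 * (q0 * a1 - q1 * a0) = 0"
      unfolding i1 i2 lq la' by simp_all
    then show "q0 * a1 = q1 * a0" using l01 by auto
  next
    assume "q0 * a1 = q1 * a0"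
    then have d: "q0 * a1 - q1 * a0 = 0" by simp
    have "a0 * (l0 * q0 + l1 * q1) = 0" "a1 * (l0 * q0 + l1 * q1) = 0"
      unfolding i3 i4 d la' by simp_all
    then show "l0 * q0 + l1 * q1 = 0" using a01 by auto
  qed
qed

lemma line110_eq_through:
  fixes P :: "'a::field pt3"
  assumes "l \<noteq> (0, 0)" "m \<noteq> (0, 0)" and P: "P \<in> line110 l m"
  shows "line110 l m = {Q. valid_pt Q \<and> proj_eq (fst Q) (fst P) \<and> proj_eq (fst (snd Q)) (fst (snd P))}"
proof -
  have "valid_pt P" and la: "fst l * fst (fst P) + snd l * snd (fst P) = 0"
    and mb: "fst m * fst (fst (snd P)) + snd m * snd (fst (snd P)) = 0"
    using P by (auto simp: line110_def)
  have nz: "fst P \<noteq> (0, 0)" "fst (snd P) \<noteq> (0, 0)" using valid_ptD[OF \<open>valid_pt P\<close>] by auto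
  show ?thesis
  proof (rule set_eqI)
    fix Q :: "'a pt3"
    show "Q \<in> line110 l m \<longleftrightarrow>
        Q \<in> {Q. valid_pt Q \<and> proj_eq (fst Q) (fst P) \<and> proj_eq (fst (snd Q)) (fst (snd P))}"
      unfolding line110_def mem_Collect_eq
      using orthogonal_iff_proj_eq[OF assms(1) nz(1) la, of "fst Q"]
        orthogonal_iff_proj_eq[OF assms(2) nz(2) mb, of "fst (snd Q)"] by simp
  qed
qed

definition line_through :: "'a::field pt3 \<Rightarrow> 'a pt3 set" where
  "line_through P = line110 (snd (fst P), - fst (fst P)) (snd (fst (snd P)), - fst (fst (snd P)))"

lemma line_through:
  fixes P :: "'a::field pt3"
  assumes "valid_pt P"
  shows "is_line110 (line_through P)" "P \<in> line_through P"
    "line_through P = {Q. valid_pt Q \<and> proj_eq (fst Q) (fst P) \<and> proj_eq (fst (snd Q)) (fst (snd P))}"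
proof -
  have nonzero: "(snd (fst P), - fst (fst P)) \<noteq> (0, 0)" "(snd (fst (snd P)), - fst (fst (snd P))) \<noteq> (0, 0)"
    using valid_ptD[OF assms] by (auto simp: prod_eq_iff)
  then show "is_line110 (line_through P)"
    unfolding is_line110_def line_through_def by blast
  show P: "P \<in> line_through P"
    using assms by (simp add: line_through_def line110_def mult.commute)
  show "line_through P = {Q. valid_pt Q \<and> proj_eq (fst Q) (fst P) \<and> proj_eq (fst (snd Q)) (fst (snd P))}"
    using line110_eq_through[OF nonzero P[unfolded line_through_def]] by (simp add: line_through_def)
qed

lemma line110_through_point:
  assumes X: "point_set X" and L: "is_line110 L" and P: "P \<in> X \<inter> L"
  shows "L = line_through P" "X \<inter> L = fibre12 X P"
proof -
  obtain l m where lm: "l \<noteq> (0, 0)" "m \<noteq> (0, 0)" "L = line110 l m"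
    using L by (auto simp: is_line110_def)
  have "valid_pt P" using X P by (auto simp: point_set_def)
  show L_eq: "L = line_through P"
    using line110_eq_through[OF lm(1,2)] P lm(3) line_through(3)[OF \<open>valid_pt P\<close>] by auto
  show "X \<inter> L = fibre12 X P"
    using X unfolding L_eq line_through(3)[OF \<open>valid_pt P\<close>] fibre12_def by (auto simp: point_set_def)
qed

lemma r_lines_eq_card_fibres12:
  assumes X: "point_set X" and "n \<ge> 1"
  shows "r_lines n X = card {\<Phi> \<in> fibres12 X. card \<Phi> = n}"
  unfolding r_lines_def
proof (rule bij_betw_same_card[of "\<lambda>L. X \<inter> L"], rule bij_betwI')
  fix L L' assume L: "L \<in> {L. is_line110 L \<and> card (X \<inter> L) = n}"
    and L': "L' \<in> {L. is_line110 L \<and> card (X \<inter> L) = n}"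
  show "X \<inter> L = X \<inter> L' \<longleftrightarrow> L = L'"
  proof
    assume eq: "X \<inter> L = X \<inter> L'"
    have "X \<inter> L \<noteq> {}" using L assms(2) by auto
    then obtain P where P: "P \<in> X \<inter> L" by blast
    then have P': "P \<in> X \<inter> L'" using eq by simp
    show "L = L'"
      using line110_through_point(1)[OF X _ P] line110_through_point(1)[OF X _ P'] L L' by simp
  qed simp
next
  fix L assume L: "L \<in> {L. is_line110 L \<and> card (X \<inter> L) = n}"
  have "X \<inter> L \<noteq> {}" using L assms(2) by auto
  then obtain P where P: "P \<in> X \<inter> L" by blast
  then have "X \<inter> L = fibre12 X P" using line110_through_point(2)[OF X _ P] L by simp
  then show "X \<inter> L \<in> {\<Phi> \<in> fibres12 X. card \<Phi> = n}"
    using L P by (auto simp: fibres12_def)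
next
  fix \<Phi> assume \<Phi>: "\<Phi> \<in> {\<Phi> \<in> fibres12 X. card \<Phi> = n}"
  then obtain P where P: "P \<in> X" "\<Phi> = fibre12 X P" by (auto simp: fibres12_def)
  have "valid_pt P" using X P by (auto simp: point_set_def)
  then have "X \<inter> line_through P = \<Phi>"
    using line110_through_point(2)[OF X line_through(1) IntI[OF P(1) line_through(2)]] P(2) by simp
  then show "\<exists>L\<in>{L. is_line110 L \<and> card (X \<inter> L) = n}. \<Phi> = X \<inter> L"
    using \<Phi> line_through(1)[OF \<open>valid_pt P\<close>] by auto
qed

theorem theorem3p1:
  fixes X :: "'a::field_char_0 pt3 set" and k :: nat
  assumes "alg_closed TYPE('a)"
    and "point_set X"
  shows "int (r_lines (k + 1) X)
           = dX X (int (t1 X) - 1) (int (t2 X) - 1) (int k)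
             - dX X (int (t1 X) - 1) (int (t2 X) - 1) (int k + 1)
       \<and> dX X (int (t1 X) - 1) (int (t2 X) - 1) (int k)
             - dX X (int (t1 X) - 1) (int (t2 X) - 1) (int k + 1)
           = 2 * HX X (int (t1 X) - 1) (int (t2 X) - 1) (int k)
             - HX X (int (t1 X) - 1) (int (t2 X) - 1) (int k - 1)
             - HX X (int (t1 X) - 1) (int (t2 X) - 1) (int k + 1)"
proof
  let ?H = "HX X (int (t1 X) - 1) (int (t2 X) - 1)"
  let ?G = "\<lambda>n. int (\<Sum>\<Phi>\<in>fibres12 X. min n (card \<Phi>))"
  have "?H (int k - 1) = ?G k" "?H (int k) = ?G (k + 1)" "?H (int k + 1) = ?G (k + 2)"
    using HX_fibre_degree[OF assms(2)] by (simp_all add: nat_add_distrib)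
  moreover have "int (r_lines (k + 1) X) = 2 * ?G (k + 1) - ?G k - ?G (k + 2)"
    using r_lines_eq_card_fibres12[OF assms(2)]
      sum_min_second_difference[OF finite_fibres12[OF assms(2)]] by simp
  ultimately show "int (r_lines (k + 1) X) = dX X (int (t1 X) - 1) (int (t2 X) - 1) (int k)
      - dX X (int (t1 X) - 1) (int (t2 X) - 1) (int k + 1)"
    by (simp add: dX_def)
  show "dX X (int (t1 X) - 1) (int (t2 X) - 1) (int k)
      - dX X (int (t1 X) - 1) (int (t2 X) - 1) (int k + 1)
      = 2 * ?H (int k) - ?H (int k - 1) - ?H (int k + 1)"
    by (simp add: dX_def)
qed

end
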